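(* Let $f:(0,\infty)\to(0,\infty)$ satisfy $\lim_{\beta\to\infty}f(\beta)=\infty$, $\lim_{\beta\to\infty}\frac1\beta\log f(\beta)=0$ and $\lim_{\beta\to\infty}|\Lambda_\beta|/f(\beta)=\infty$, and let $\mathcal W=\{\sigma\in\mathcal S:|\mathrm{supp}[\sigma]|\le|\Lambda_\beta|/f(\beta)\}$. Then $$\lim_{\beta\to\infty}\frac1\beta\log\frac{\mu_\beta(\mathcal S\setminus\mathcal W)}{\mu_\beta(\mathcal S)}=-\infty.$$
   Context: Glauber setting. Fix $J>0$, $h>0$ with $0<h<2J$ and $2J/h\notin\mathbb N$; $\ell_c=\lceil 2J/h\rceil$. $\Lambda_\beta\subset\mathbb Z^2$: square box of odd side length centred at the origin with periodic boundary conditions, $|\Lambda_\beta|\to\infty$. State space $\mathcal X_\beta=\{-1,+1\}^{\Lambda_\beta}$, $\mathrm{supp}[\sigma]=\{x:\sigma(x)=+1\}$. Hamiltonian $H_\beta(\sigma)=-\frac J2\sum_{\{x,y\}}\sigma(x)\sigma(y)-\frac h2\sum_x\sigma(x)$ (unordered nearest-neighbour pairs); Gibbs measure $\mu_\beta=e^{-\beta H_\beta}/Z_\beta$. Bootstrap map $C_B(\sigma)$: replace each cluster of $(+1)$-spins by its circumscribed rectangle and iterate (merging rectangles at distance $<2$) until the $(+1)$-spins form rectangles pairwise at distance $\ge2$; subcritical: each such rectangle fits in an $(\ell_c-1)\times\ell_c$ rectangle. $\mathcal S=\{\sigma:C_B(\sigma)\text{ subcritical}\}$. *)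

theory Defs
  imports "HOL-Analysis.Analysis"
begin

text \<open>The box of side L (centred at the origin in the paper) is represented, up to
translation, by the coordinates {0..<L} x {0..<L} with periodic boundary conditions.
A configuration sigma in {-1,+1}^Lambda is represented by its support
supp[sigma] = {x. sigma x = +1}, a subset of Lambda.\<close>

definition Lam :: "nat \<Rightarrow> (nat \<times> nat) set" where
  "Lam L = {0..<L} \<times> {0..<L}"

definition cd :: "nat \<Rightarrow> nat \<Rightarrow> nat \<Rightarrow> nat" where
  "cd L a b = min ((a + L - b) mod L) ((b + L - a) mod L)"

definition nn :: "nat \<Rightarrow> nat \<times> nat \<Rightarrow> nat \<times> nat \<Rightarrow> bool" where
  "nn L x y \<longleftrightarrow>
     (fst x = fst y \<and> cd L (snd x) (snd y) = 1) \<or> (snd x = snd y \<and> cd L (fst x) (fst y) = 1)"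

definition edges :: "nat \<Rightarrow> (nat \<times> nat) set set" where
  "edges L = {{x, y} | x y. x \<in> Lam L \<and> y \<in> Lam L \<and> nn L x y}"

definition spin :: "(nat \<times> nat) set \<Rightarrow> nat \<times> nat \<Rightarrow> real" where
  "spin A x = (if x \<in> A then 1 else -1)"

definition Ham :: "nat \<Rightarrow> real \<Rightarrow> real \<Rightarrow> (nat \<times> nat) set \<Rightarrow> real" where
  "Ham L J h A = - (J / 2) * (\<Sum>e\<in>edges L. \<Prod>x\<in>e. spin A x)
                 - (h / 2) * (\<Sum>x\<in>Lam L. spin A x)"

definition Xs :: "nat \<Rightarrow> (nat \<times> nat) set set" where
  "Xs L = Pow (Lam L)"

definition Zpart :: "nat \<Rightarrow> real \<Rightarrow> real \<Rightarrow> real \<Rightarrow> real" where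
  "Zpart L J h \<beta> = (\<Sum>A\<in>Xs L. exp (- \<beta> * Ham L J h A))"

definition gibbs :: "nat \<Rightarrow> real \<Rightarrow> real \<Rightarrow> real \<Rightarrow> (nat \<times> nat) set set \<Rightarrow> real" where
  "gibbs L J h \<beta> W = (\<Sum>A\<in>W \<inter> Xs L. exp (- \<beta> * Ham L J h A)) / Zpart L J h \<beta>"

definition arc :: "nat \<Rightarrow> nat \<Rightarrow> nat \<Rightarrow> nat set" where
  "arc L a w = {(a + i) mod L | i. i < w}"

definition is_arc :: "nat \<Rightarrow> nat set \<Rightarrow> bool" where
  "is_arc L X \<longleftrightarrow> (\<exists>a w. a < L \<and> 1 \<le> w \<and> w \<le> L \<and> X = arc L a w)"

definition is_rect :: "nat \<Rightarrow> (nat \<times> nat) set \<Rightarrow> bool" where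
  "is_rect L R \<longleftrightarrow> (\<exists>X Y. is_arc L X \<and> is_arc L Y \<and> R = X \<times> Y)"

definition is_circ :: "nat \<Rightarrow> (nat \<times> nat) set \<Rightarrow> (nat \<times> nat) set \<Rightarrow> bool" where
  "is_circ L A R \<longleftrightarrow> is_rect L R \<and> A \<subseteq> R \<and> (\<forall>R'. is_rect L R' \<and> A \<subseteq> R' \<longrightarrow> R \<subseteq> R')"

text \<open>two sets of sites are at (Euclidean, periodic) distance < 2 iff they contain
sites differing by at most 1 in each coordinate\<close>
definition close :: "nat \<Rightarrow> (nat \<times> nat) set \<Rightarrow> (nat \<times> nat) set \<Rightarrow> bool" where
  "close L R1 R2 \<longleftrightarrow>
     (\<exists>x\<in>R1. \<exists>y\<in>R2. cd L (fst x) (fst y) \<le> 1 \<and> cd L (snd x) (snd y) \<le> 1)"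

definition cluster :: "nat \<Rightarrow> (nat \<times> nat) set \<Rightarrow> nat \<times> nat \<Rightarrow> (nat \<times> nat) set" where
  "cluster L A x = {y. (\<lambda>u v. u \<in> A \<and> v \<in> A \<and> nn L u v)\<^sup>*\<^sup>* x y}"

definition init_rects :: "nat \<Rightarrow> (nat \<times> nat) set \<Rightarrow> (nat \<times> nat) set set" where
  "init_rects L A = {R. \<exists>x\<in>A. is_circ L (cluster L A x) R}"

definition merge_step :: "nat \<Rightarrow> (nat \<times> nat) set set \<Rightarrow> (nat \<times> nat) set set \<Rightarrow> bool" where
  "merge_step L F F' \<longleftrightarrow>
     (\<exists>R1\<in>F. \<exists>R2\<in>F. \<exists>R. R1 \<noteq> R2 \<and> close L R1 R2 \<and> is_circ L (R1 \<union> R2) R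
        \<and> F' = insert R (F - {R1, R2}))"

definition bootstrap_final :: "nat \<Rightarrow> (nat \<times> nat) set \<Rightarrow> (nat \<times> nat) set set \<Rightarrow> bool" where
  "bootstrap_final L A F \<longleftrightarrow>
     (merge_step L)\<^sup>*\<^sup>* (init_rects L A) F
     \<and> (\<forall>R1\<in>F. \<forall>R2\<in>F. R1 \<noteq> R2 \<longrightarrow> \<not> close L R1 R2)"

definition CB :: "nat \<Rightarrow> (nat \<times> nat) set \<Rightarrow> (nat \<times> nat) set set" where
  "CB L A = (SOME F. bootstrap_final L A F)"

definition fits :: "nat \<Rightarrow> nat \<Rightarrow> (nat \<times> nat) set \<Rightarrow> bool" where
  "fits L lc R \<longleftrightarrow> (\<exists>a b w v. R \<subseteq> arc L a w \<times> arc L b v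
       \<and> ((w \<le> lc - 1 \<and> v \<le> lc) \<or> (w \<le> lc \<and> v \<le> lc - 1)))"

definition subcritical :: "nat \<Rightarrow> nat \<Rightarrow> (nat \<times> nat) set set \<Rightarrow> bool" where
  "subcritical L lc F \<longleftrightarrow> (\<forall>R\<in>F. fits L lc R)"

definition Sset :: "nat \<Rightarrow> nat \<Rightarrow> (nat \<times> nat) set set" where
  "Sset L lc = {A \<in> Xs L. subcritical L lc (CB L A)}"

definition Wset :: "nat \<Rightarrow> nat \<Rightarrow> real \<Rightarrow> (nat \<times> nat) set set" where
  "Wset L lc fb = {A \<in> Sset L lc. real (card A) \<le> real (card (Lam L)) / fb}"

end

theory Submission
  imports Defs
begin

(* Key step, an isoperimetric inequality: if the bootstrap family of A consists of separated
   rectangles fitting into (lc-1) x lc boxes, then 2 |A| <= (lc - 1) |boundary A|, because a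
   walk from any site of A along the short side of its rectangle leaves A within lc - 1 steps,
   in both orientations.  With H(A) - H({}) = J |boundary A| - h |A| each A in S costs at
   least c |A|, c = 2J/(lc - 1) - h > 0; summing over supports with more than K = |Lambda|/f
   plus spins bounds the ratio by exp(-(beta c - ln f) K + K), while the empty configuration
   and the checkerboard keep numerator and denominator positive. *)

section \<open>Arcs and connected sets of residues modulo L\<close>

definition ofs :: "nat \<Rightarrow> nat \<Rightarrow> nat \<Rightarrow> nat" where
  "ofs L a x = (x + L - a) mod L"

lemma mod_less_double: "n < 2 * L \<Longrightarrow> (n::nat) mod L = (if n < L then n else n - L)"
  by (simp add: le_mod_geq)

lemma ofs_eq: "a < L \<Longrightarrow> x < L \<Longrightarrow> ofs L a x = (if a \<le> x then x - a else x + L - a)"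
  unfolding ofs_def by (subst mod_less_double) auto

lemma ofs_less: "0 < L \<Longrightarrow> ofs L a x < L"
  unfolding ofs_def by simp

lemma ofs_inverse: "a < L \<Longrightarrow> x < L \<Longrightarrow> (a + ofs L a x) mod L = x"
  by (auto simp: ofs_eq)

lemma cd_ofs: "cd L a b = min (ofs L b a) (ofs L a b)"
  unfolding cd_def ofs_def ..

lemma cd_self [simp]: "cd L a a = 0"
  unfolding cd_def by simp

lemma cd_sym: "cd L a b = cd L b a"
  unfolding cd_def by simp

lemma ofs_step:
  assumes "a < L" "u < L" "v < L" "ofs L a u \<le> L - 2" "ofs L a v \<le> L - 2" "cd L u v \<le> 1"
  shows "ofs L a v \<le> ofs L a u + 1"
  using assms unfolding cd_ofs by (auto simp: ofs_eq split: if_splits)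

lemma ofs_shift:
  assumes "a < L" "x < L" "m \<le> M" "M + 2 \<le> L"
  shows "ofs L ((a + m) mod L) x < M - m + 1 \<longleftrightarrow> m \<le> ofs L a x \<and> ofs L a x \<le> M"
  using assms by (auto simp: ofs_eq mod_less_double split: if_splits)

lemma arc_char: "a < L \<Longrightarrow> w \<le> L \<Longrightarrow> arc L a w = {x. x < L \<and> ofs L a x < w}"
proof (intro set_eqI iffI)
  fix x assume "a < L" "w \<le> L" "x \<in> arc L a w"
  then obtain i where "i < w" "x = (a + i) mod L" unfolding arc_def by auto
  with \<open>a < L\<close> \<open>w \<le> L\<close> show "x \<in> {x. x < L \<and> ofs L a x < w}"
    by (auto simp: ofs_eq mod_less_double)
next
  fix x assume "a < L" "x \<in> {x. x < L \<and> ofs L a x < w}"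
  then have "x = (a + ofs L a x) mod L" "ofs L a x < w" by (simp_all add: ofs_inverse)
  then show "x \<in> arc L a w" unfolding arc_def by blast
qed

lemma arc_image: "arc L a w = (\<lambda>i. (a + i) mod L) ` {..<w}"
  unfolding arc_def by auto

lemma finite_arc: "finite (arc L a w)"
  unfolding arc_image by simp

lemma card_arc_le: "card (arc L a w) \<le> w"
  unfolding arc_image by (metis card_image_le card_lessThan finite_lessThan)

lemma arc_mem: "i < w \<Longrightarrow> (a + i) mod L \<in> arc L a w"
  unfolding arc_image by simp

lemma arc_single: "c < L \<Longrightarrow> arc L c 1 = {c}"
  unfolding arc_def by auto

lemma is_arc_single: "c < L \<Longrightarrow> is_arc L {c}"
  unfolding is_arc_def using arc_single by (intro exI[of _ c] exI[of _ 1]) auto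

definition cconnected :: "nat \<Rightarrow> nat set \<Rightarrow> bool" where
  "cconnected L P \<longleftrightarrow>
     (\<forall>x\<in>P. \<forall>y\<in>P. (\<lambda>u v. u \<in> P \<and> v \<in> P \<and> cd L u v \<le> 1)\<^sup>*\<^sup>* x y)"

text \<open>Since the step relation is symmetric, it suffices to reach every point from one root.\<close>

lemma cconnectedI_root:
  assumes "x0 \<in> P" "\<forall>y\<in>P. (\<lambda>u v. u \<in> P \<and> v \<in> P \<and> cd L u v \<le> 1)\<^sup>*\<^sup>* x0 y"
  shows "cconnected L P"
proof -
  let ?R = "\<lambda>u v. u \<in> P \<and> v \<in> P \<and> cd L u v \<le> 1"
  have "symp ?R\<^sup>*\<^sup>*" by (rule symp_rtranclp) (auto simp: symp_def cd_sym)
  with assms show ?thesis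
    unfolding cconnected_def by (meson rtranclp_trans sympD)
qed

lemma cd_succ_le:
  assumes "c < L" shows "cd L c ((c + 1) mod L) \<le> 1"
proof (cases "c + 1 < L")
  case True then show ?thesis by (simp add: cd_ofs ofs_eq)
next
  case False
  then have "c + 1 = L" using assms by simp
  then show ?thesis by (auto simp: cd_ofs ofs_eq)
qed

lemma arc_cconnected: "0 < L \<Longrightarrow> cconnected L (arc L a w)"
proof (cases "w = 0")
  case True then show ?thesis unfolding cconnected_def arc_def by auto
next
  case False
  assume L: "0 < L"
  let ?R = "\<lambda>u v. u \<in> arc L a w \<and> v \<in> arc L a w \<and> cd L u v \<le> 1"
  have "?R\<^sup>*\<^sup>* (a mod L) ((a + k) mod L)" if "k < w" for k
    using that
  proof (induction k)
    case (Suc k)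
    have "(a + Suc k) mod L = ((a + k) mod L + 1) mod L" by (simp add: mod_Suc_eq)
    moreover have "cd L ((a + k) mod L) (((a + k) mod L + 1) mod L) \<le> 1"
      using L by (intro cd_succ_le) simp
    ultimately have "cd L ((a + k) mod L) ((a + Suc k) mod L) \<le> 1" by simp
    then have "?R ((a + k) mod L) ((a + Suc k) mod L)"
      using Suc.prems arc_mem[of k w a L] arc_mem[of "Suc k" w a L] by simp
    moreover have "?R\<^sup>*\<^sup>* (a mod L) ((a + k) mod L)" using Suc by simp
    ultimately show ?case by (simp add: rtranclp.rtrancl_into_rtrancl)
  qed simp
  then show ?thesis
    using False arc_mem[of 0 w a L] by (intro cconnectedI_root[of "a mod L"]) (auto simp: arc_def)
qed

lemma cconnected_union:
  assumes "cconnected L X" "cconnected L Y" "x \<in> X" "y \<in> Y" "cd L x y \<le> 1"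
  shows "cconnected L (X \<union> Y)"
proof (rule cconnectedI_root[of x])
  let ?Q = "\<lambda>u v. u \<in> X \<union> Y \<and> v \<in> X \<union> Y \<and> cd L u v \<le> 1"
  have lift: "?Q\<^sup>*\<^sup>* a b" if "(\<lambda>u v. u \<in> Z \<and> v \<in> Z \<and> cd L u v \<le> 1)\<^sup>*\<^sup>* a b" "Z \<subseteq> X \<union> Y"
    for a b Z
    using mono_rtranclp[of "\<lambda>u v. u \<in> Z \<and> v \<in> Z \<and> cd L u v \<le> 1" ?Q] that by blast
  have "?Q\<^sup>*\<^sup>* x z" if "z \<in> X \<union> Y" for z
  proof (cases "z \<in> X")
    case True then show ?thesis using assms lift[of X] unfolding cconnected_def by blast
  next
    case False
    then have yz: "?Q\<^sup>*\<^sup>* y z" using that assms lift[of Y] unfolding cconnected_def by blast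
    have xy: "?Q x y" using assms by simp
    show ?thesis by (rule converse_rtranclp_into_rtranclp[of ?Q, OF xy yz])
  qed
  then show "\<forall>z\<in>X \<union> Y. ?Q\<^sup>*\<^sup>* x z" by blast
qed (use assms in simp)

lemma discrete_ivt:
  fixes t :: "'a \<Rightarrow> nat"
  assumes "R\<^sup>*\<^sup>* x y" "x \<in> P"
    and "\<And>u v. R u v \<Longrightarrow> v \<in> P \<and> t v \<le> t u + 1 \<and> t u \<le> t v + 1"
    and "min (t x) (t y) \<le> k" "k \<le> max (t x) (t y)"
  shows "\<exists>z\<in>P. t z = k"
  using assms(1,4,5)
proof (induction rule: rtranclp_induct)
  case (step y z)
  show ?case
  proof (cases "min (t x) (t y) \<le> k \<and> k \<le> max (t x) (t y)")
    case False
    with step.prems assms(3)[OF step(2)] have "k = t z"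
      unfolding min_def max_def by (auto split: if_splits)
    then show ?thesis using assms(3)[OF step(2)] by blast
  qed (use step.IH in blast)
qed (use assms(2) in auto)

lemma is_arc_full: "0 < L \<Longrightarrow> is_arc L {..<L}"
proof -
  assume L: "0 < L"
  have "arc L 0 L = {x. x < L \<and> ofs L 0 x < L}" using L by (intro arc_char) auto
  also have "\<dots> = {..<L}" using ofs_less[OF L] by auto
  finally show ?thesis unfolding is_arc_def using L by (intro exI[of _ 0] exI[of _ L]) simp
qed

lemma cconnected_offsets_interval:
  assumes aL: "a < L" and P: "P \<subseteq> {..<L}" and conn: "cconnected L P"
    and gap: "\<And>x. x \<in> P \<Longrightarrow> ofs L a x \<le> L - 2" and ends: "xm \<in> P" "xM \<in> P"
    and x: "x < L" "ofs L a xm \<le> ofs L a x" "ofs L a x \<le> ofs L a xM"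
  shows "x \<in> P"
proof -
  let ?t = "ofs L a"
  have path: "(\<lambda>u v. u \<in> P \<and> v \<in> P \<and> cd L u v \<le> 1)\<^sup>*\<^sup>* xm xM"
    using conn ends unfolding cconnected_def by blast
  have "\<exists>z\<in>P. ?t z = ?t x"
  proof (rule discrete_ivt[OF path ends(1)])
    fix u v assume uv: "u \<in> P \<and> v \<in> P \<and> cd L u v \<le> 1"
    then have "u < L" "v < L" "cd L v u \<le> 1" using P by (auto simp: cd_sym)
    then have "?t v \<le> ?t u + 1" "?t u \<le> ?t v + 1"
      using uv gap ofs_step[OF aL] by auto
    then show "v \<in> P \<and> ?t v \<le> ?t u + 1 \<and> ?t u \<le> ?t v + 1" using uv by blast
  qed (use x in auto)
  then obtain z where z: "z \<in> P" "?t z = ?t x" by blast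
  then have "z < L" using P by auto
  then have "z = x" using ofs_inverse[OF aL] x(1) z(2) by metis
  then show "x \<in> P" using z by simp
qed

text \<open>If the set misses some residue g, measure offsets from g + 1; they never exceed L - 2 on the
  set, so the set is the full range between its minimal and maximal offset.\<close>

lemma cconnected_is_arc:
  assumes L: "0 < L" and P: "P \<subseteq> {..<L}" "P \<noteq> {}" and conn: "cconnected L P"
  shows "is_arc L P"
proof (cases "P = {..<L}")
  case False
  then obtain g where g: "g < L" "g \<notin> P" using P by auto
  define a where "a = (g + 1) mod L"
  have aL: "a < L" using L by (simp add: a_def)
  let ?t = "ofs L a"
  have "?t g = L - 1"
  proof (cases "g + 1 < L")
    case True then show ?thesis using g by (simp add: a_def ofs_eq)
  next
    case False
    then have "g + 1 = L" using g by simp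
    then have "a = 0" by (simp add: a_def)
    then show ?thesis using \<open>g + 1 = L\<close> by (simp add: ofs_def)
  qed
  have gap: "?t x \<le> L - 2" if "x \<in> P" for x
  proof -
    have "x < L" "x \<noteq> g" using that P g by auto
    then have "?t x \<noteq> ?t g" using ofs_inverse[OF aL] g(1) by metis
    then show ?thesis using \<open>?t g = L - 1\<close> ofs_less[OF L, of a x] by linarith
  qed
  have fin: "finite P" using P finite_subset by blast
  define m where "m = Min (?t ` P)"
  define M where "M = Max (?t ` P)"
  have "m \<in> ?t ` P" "M \<in> ?t ` P" unfolding m_def M_def using fin P by (auto intro: Min_in Max_in)
  then obtain xm xM where xm: "xm \<in> P" "?t xm = m" and xM: "xM \<in> P" "?t xM = M" by blast
  have bounds: "m \<le> ?t x" "?t x \<le> M" if "x \<in> P" for x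
    using that fin by (auto simp: m_def M_def)
  have "xM < L" "xM \<noteq> g" using xM(1) P g by auto
  then have M2: "M + 2 \<le> L" using g(1) gap[OF xM(1)] xM(2) by linarith
  have Peq: "P = {x. x < L \<and> m \<le> ?t x \<and> ?t x \<le> M}"
    using P bounds cconnected_offsets_interval[OF aL P(1) conn gap xm(1) xM(1)] xm(2) xM(2) by auto
  have "arc L ((a + m) mod L) (M - m + 1) = {x. x < L \<and> ofs L ((a + m) mod L) x < M - m + 1}"
    using L M2 by (intro arc_char) auto
  also have "\<dots> = P"
    unfolding Peq using ofs_shift[OF aL _ _ M2] bounds[OF xm(1)] xm(2) by auto
  finally show ?thesis
    unfolding is_arc_def using L M2 by (intro exI[of _ "(a + m) mod L"] exI[of _ "M - m + 1"]) auto
qed (use is_arc_full[OF L] in simp)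

section \<open>Rectangles and the bootstrap map\<close>

lemma is_arc_props:
  assumes "0 < L" "is_arc L X"
  shows "X \<subseteq> {..<L}" "X \<noteq> {}" "cconnected L X"
proof -
  obtain a w where "1 \<le> w" "X = arc L a w" using assms(2) unfolding is_arc_def by blast
  then show "X \<subseteq> {..<L}" "X \<noteq> {}" "cconnected L X"
    using assms(1) arc_mem[of 0 w a L] arc_cconnected unfolding arc_image by auto
qed

lemma arc_union_arc:
  assumes "0 < L" "is_arc L X" "is_arc L Y" "x \<in> X" "y \<in> Y" "cd L x y \<le> 1"
  shows "is_arc L (X \<union> Y)"
  using assms is_arc_props[OF assms(1)] cconnected_union[of L X Y x y]
  by (intro cconnected_is_arc) auto

lemma nn_cd: "nn L u v \<Longrightarrow> cd L (fst u) (fst v) \<le> 1 \<and> cd L (snd u) (snd v) \<le> 1"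
  unfolding nn_def by auto

lemma nn_neq: "nn L u v \<Longrightarrow> u \<noteq> v"
  unfolding nn_def by auto

lemma rect_projections:
  assumes "0 < L" "is_rect L R"
  obtains X Y where "R = X \<times> Y" "is_arc L X" "is_arc L Y" "fst ` R = X" "snd ` R = Y"
proof -
  obtain X Y where "R = X \<times> Y" "is_arc L X" "is_arc L Y" using assms unfolding is_rect_def by blast
  moreover have "X \<noteq> {}" "Y \<noteq> {}" using calculation is_arc_props[OF assms(1)] by auto
  ultimately show ?thesis using that by auto
qed

lemma rect_subset_Lam: "0 < L \<Longrightarrow> is_rect L R \<Longrightarrow> R \<subseteq> Lam L"
  unfolding Lam_def by (metis is_arc_props(1) atLeast0LessThan rect_projections Sigma_mono)

lemma circ_of_projections:
  assumes "S \<noteq> {}" "is_arc L (fst ` S)" "is_arc L (snd ` S)"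
  shows "is_circ L S (fst ` S \<times> snd ` S)"
  unfolding is_circ_def
proof (intro conjI allI impI)
  show "is_rect L (fst ` S \<times> snd ` S)" unfolding is_rect_def using assms by blast
  show "S \<subseteq> fst ` S \<times> snd ` S" by (auto intro: rev_image_eqI)
  fix R' assume R': "is_rect L R' \<and> S \<subseteq> R'"
  then obtain X Y where "R' = X \<times> Y" unfolding is_rect_def by blast
  with R' show "fst ` S \<times> snd ` S \<subseteq> R'" by auto
qed

lemma circ_unique: "is_circ L S R \<Longrightarrow> is_circ L S R' \<Longrightarrow> R = R'"
  unfolding is_circ_def by blast

lemma merge_circ:
  assumes L: "0 < L" and "is_rect L R1" "is_rect L R2" "close L R1 R2"
  shows "\<exists>R. is_circ L (R1 \<union> R2) R"
proof -
  obtain X1 Y1 where 1: "R1 = X1 \<times> Y1" "is_arc L X1" "is_arc L Y1" "fst ` R1 = X1" "snd ` R1 = Y1"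
    using rect_projections[OF L assms(2)] by blast
  obtain X2 Y2 where 2: "R2 = X2 \<times> Y2" "is_arc L X2" "is_arc L Y2" "fst ` R2 = X2" "snd ` R2 = Y2"
    using rect_projections[OF L assms(3)] by blast
  obtain p q where pq: "p \<in> R1" "q \<in> R2" "cd L (fst p) (fst q) \<le> 1" "cd L (snd p) (snd q) \<le> 1"
    using assms(4) unfolding close_def by blast
  have "fst ` (R1 \<union> R2) = X1 \<union> X2" "snd ` (R1 \<union> R2) = Y1 \<union> Y2"
    using 1 2 by (simp_all add: image_Un)
  moreover have "is_arc L (X1 \<union> X2)" "is_arc L (Y1 \<union> Y2)"
    using arc_union_arc[OF L] 1 2 pq by (auto simp: mem_Times_iff)
  ultimately show ?thesis using circ_of_projections[of "R1 \<union> R2"] pq by auto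
qed

lemma cluster_projection_cconnected:
  assumes pr: "\<And>u v. nn L u v \<Longrightarrow> cd L (pr u) (pr v) \<le> 1"
  shows "cconnected L (pr ` cluster L A x)"
proof (rule cconnectedI_root[of "pr x"])
  let ?RA = "\<lambda>u v. u \<in> A \<and> v \<in> A \<and> nn L u v"
  let ?Q = "\<lambda>u v. u \<in> pr ` cluster L A x \<and> v \<in> pr ` cluster L A x \<and> cd L u v \<le> 1"
  show "pr x \<in> pr ` cluster L A x" unfolding cluster_def by simp
  have "?Q\<^sup>*\<^sup>* (pr x) (pr z)" if "?RA\<^sup>*\<^sup>* x z" for z
    using that
  proof (induction rule: rtranclp_induct)
    case (step y z)
    then have "y \<in> cluster L A x" "z \<in> cluster L A x"
      unfolding cluster_def by (auto intro: rtranclp.rtrancl_into_rtrancl)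
    then have "?Q (pr y) (pr z)" using pr step(2) by blast
    with step.IH show ?case by (simp add: rtranclp.rtrancl_into_rtrancl)
  qed simp
  then show "\<forall>y\<in>pr ` cluster L A x. ?Q\<^sup>*\<^sup>* (pr x) y" unfolding cluster_def by auto
qed

lemma cluster_subset: "cluster L A x \<subseteq> insert x A"
proof
  fix y assume "y \<in> cluster L A x"
  then have "(\<lambda>u v. u \<in> A \<and> v \<in> A \<and> nn L u v)\<^sup>*\<^sup>* x y" unfolding cluster_def by simp
  then show "y \<in> insert x A" by (induction rule: rtranclp_induct) auto
qed

lemma cluster_circ:
  assumes L: "0 < L" and A: "A \<subseteq> Lam L" "x \<in> A"
  shows "\<exists>R. is_circ L (cluster L A x) R \<and> x \<in> R"
proof -
  let ?C = "cluster L A x"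
  have xC: "x \<in> ?C" unfolding cluster_def by simp
  have CL: "?C \<subseteq> Lam L" using cluster_subset[of L A x] A by blast
  have "is_arc L (fst ` ?C)"
    using CL xC by (intro cconnected_is_arc[OF L] cluster_projection_cconnected)
      (auto dest: nn_cd simp: Lam_def)
  moreover have "is_arc L (snd ` ?C)"
    using CL xC by (intro cconnected_is_arc[OF L] cluster_projection_cconnected)
      (auto dest: nn_cd simp: Lam_def)
  ultimately have "is_circ L ?C (fst ` ?C \<times> snd ` ?C)" using circ_of_projections xC by blast
  moreover have "x \<in> fst ` ?C \<times> snd ` ?C" using xC by (simp add: mem_Times_iff)
  ultimately show ?thesis by blast
qed

lemma bootstrap_invariant:
  assumes L: "0 < L" and A: "A \<subseteq> Lam L" and "(merge_step L)\<^sup>*\<^sup>* (init_rects L A) F"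
  shows "(\<forall>R\<in>F. is_rect L R) \<and> (\<forall>x\<in>A. \<exists>R\<in>F. x \<in> R)"
  using assms(3)
proof (induction rule: rtranclp_induct)
  case base
  have "\<forall>R\<in>init_rects L A. is_rect L R" unfolding init_rects_def is_circ_def by auto
  moreover have "\<forall>x\<in>A. \<exists>R\<in>init_rects L A. x \<in> R"
    using cluster_circ[OF L A] unfolding init_rects_def by blast
  ultimately show ?case ..
next
  case (step F F')
  then obtain R1 R2 R where m: "R1 \<in> F" "R2 \<in> F" "is_circ L (R1 \<union> R2) R"
    "F' = insert R (F - {R1, R2})"
    unfolding merge_step_def by blast
  have "\<exists>R\<in>F'. x \<in> R" if "x \<in> A" for x
  proof -
    obtain Q where Q: "Q \<in> F" "x \<in> Q" using step.IH \<open>x \<in> A\<close> by blast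
    show ?thesis
    proof (cases "Q = R1 \<or> Q = R2")
      case True then show ?thesis using m Q unfolding is_circ_def by blast
    qed (use m Q in blast)
  qed
  then show ?case using m step.IH unfolding is_circ_def by auto
qed

text \<open>The bootstrap procedure terminates: a reachable family of minimal cardinality admits no
  further merging step, since merging two distinct rectangles lowers the cardinality.\<close>

lemma bootstrap_final_exists:
  assumes L: "0 < L" and A: "A \<subseteq> Lam L"
  shows "\<exists>F. bootstrap_final L A F"
proof -
  let ?Re = "\<lambda>F. (merge_step L)\<^sup>*\<^sup>* (init_rects L A) F"
  have fin: "finite F" if "?Re F" for F
  proof -
    have "F \<subseteq> Pow (Lam L)" using bootstrap_invariant[OF L A that] rect_subset_Lam[OF L] by blast
    then show ?thesis by (rule finite_subset) (simp add: Lam_def)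
  qed
  obtain F where F: "?Re F" and least: "\<And>F'. ?Re F' \<Longrightarrow> card F \<le> card F'"
    using ex_has_least_nat[of ?Re "init_rects L A" card] by blast
  have "\<not> close L R1 R2" if R: "R1 \<in> F" "R2 \<in> F" "R1 \<noteq> R2" for R1 R2
  proof
    assume "close L R1 R2"
    moreover have "is_rect L R1" "is_rect L R2" using bootstrap_invariant[OF L A F] R by auto
    ultimately obtain R where "is_circ L (R1 \<union> R2) R" using merge_circ[OF L] by blast
    then have "merge_step L F (insert R (F - {R1, R2}))"
      unfolding merge_step_def using R \<open>close L R1 R2\<close> by blast
    then have "?Re (insert R (F - {R1, R2}))" using F by (meson rtranclp.rtrancl_into_rtrancl)
    moreover have "card (insert R (F - {R1, R2})) < card F"
    proof -
      have "2 \<le> card F" using card_mono[OF fin[OF F], of "{R1, R2}"] R by simp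
      moreover have "card (F - {R1, R2}) = card F - 2" using R fin[OF F] by (simp add: card_Diff_subset)
      ultimately show ?thesis using fin[OF F] by (auto simp: card_insert_if)
    qed
    ultimately show False using least by fastforce
  qed
  then show ?thesis unfolding bootstrap_final_def using F by blast
qed

lemma CB_final:
  assumes "0 < L" "A \<subseteq> Lam L" shows "bootstrap_final L A (CB L A)"
  unfolding CB_def by (rule someI_ex[OF bootstrap_final_exists[OF assms]])

lemma CB_covers:
  assumes "0 < L" "A \<subseteq> Lam L" "x \<in> A" shows "\<exists>R\<in>CB L A. x \<in> R"
proof -
  have "(merge_step L)\<^sup>*\<^sup>* (init_rects L A) (CB L A)"
    using CB_final[OF assms(1,2)] unfolding bootstrap_final_def by blast
  then have "\<forall>x\<in>A. \<exists>R\<in>CB L A. x \<in> R" using bootstrap_invariant[OF assms(1,2)] by blast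
  then show ?thesis using assms(3) by blast
qed

section \<open>An isoperimetric inequality for subcritical configurations\<close>

definition shift :: "nat \<Rightarrow> bool \<Rightarrow> nat \<times> nat \<Rightarrow> nat \<Rightarrow> nat \<times> nat" where
  "shift L d x k = (if d then ((fst x + k) mod L, snd x) else (fst x, (snd x + k) mod L))"

definition coord :: "bool \<Rightarrow> nat \<times> nat \<Rightarrow> nat" where
  "coord d x = (if d then fst x else snd x)"

definition boundary :: "nat \<Rightarrow> (nat \<times> nat) set \<Rightarrow> (nat \<times> nat) set set" where
  "boundary L A = {e \<in> edges L. \<exists>u\<in>e. \<exists>v\<in>e. u \<in> A \<and> v \<notin> A}"

lemma finite_Lam: "finite (Lam L)"
  unfolding Lam_def by simp

lemma card_Lam: "card (Lam L) = L * L"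
  unfolding Lam_def by (simp add: card_cartesian_product)

lemma finite_edges: "finite (edges L)"
proof -
  have "edges L \<subseteq> Pow (Lam L)" unfolding edges_def by auto
  then show ?thesis using finite_Lam by (meson finite_Pow_iff finite_subset)
qed

lemma finite_boundary: "finite (boundary L A)"
  using finite_edges[of L] unfolding boundary_def by (rule finite_subset[rotated]) auto

lemma shift_add: "shift L d (shift L d x a) b = shift L d x (a + b)"
  unfolding shift_def by (simp add: mod_add_left_eq add.assoc)

lemma shift_Lam: "0 < L \<Longrightarrow> x \<in> Lam L \<Longrightarrow> shift L d x k \<in> Lam L"
  unfolding shift_def Lam_def by auto

lemma shift_full_turns: "x \<in> Lam L \<Longrightarrow> shift L d x (L * s) = x"
  unfolding shift_def Lam_def by auto

lemma shift_0: "x \<in> Lam L \<Longrightarrow> shift L d x 0 = x"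
  using shift_full_turns[of x L d 0] by simp

lemma coord_shift: "coord d (shift L d x k) = (coord d x + k) mod L"
  unfolding shift_def coord_def by auto

lemma cd_succ: "3 \<le> L \<Longrightarrow> c < L \<Longrightarrow> cd L c ((c + 1) mod L) = 1"
  by (cases "c + 1 < L") (auto simp: cd_ofs ofs_eq mod_less_double)

lemma cd_pred: "3 \<le> L \<Longrightarrow> c < L \<Longrightarrow> cd L c ((c + (L - 1)) mod L) = 1"
  by (cases "c = 0") (auto simp: cd_ofs ofs_eq mod_less_double)

lemma nn_shift:
  assumes "3 \<le> L" "x \<in> Lam L" "s = 1 \<or> s = L - 1"
  shows "nn L x (shift L d x s)"
  using assms cd_succ[OF assms(1), of "fst x"] cd_succ[OF assms(1), of "snd x"]
    cd_pred[OF assms(1), of "fst x"] cd_pred[OF assms(1), of "snd x"]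
  unfolding nn_def shift_def Lam_def by auto

lemma shift_forward_neq_backward:
  assumes "3 \<le> L" "x \<in> Lam L" shows "shift L d x 1 \<noteq> shift L d x (L - 1)"
proof -
  have "(c + 1) mod L \<noteq> (c + (L - 1)) mod L" if "c < L" for c
  proof -
    have "(c + (L - 1)) mod L = (if c = 0 then L - 1 else c - 1)"
      using that by (subst mod_less_double) auto
    moreover have "(c + 1) mod L = (if c + 1 < L then c + 1 else 0)"
      using that by (subst mod_less_double) auto
    ultimately show ?thesis using assms(1) by auto
  qed
  then show ?thesis using assms(2) unfolding shift_def Lam_def by (auto simp: prod_eq_iff)
qed

lemma walk_inj:
  fixes L s c i i' :: nat
  assumes "coprime L s" "i < L" "i' < L" "(c + i * s) mod L = (c + i' * s) mod L"
  shows "i = i'"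
proof -
  have *: "i = i'" if "i \<le> i'" "i' < L" "(c + i * s) mod L = (c + i' * s) mod L" for i i' :: nat
  proof -
    have le: "c + i * s \<le> c + i' * s" using mult_le_mono1[OF that(1), of s] by simp
    have "(c + i' * s) mod L = (c + i * s) mod L" using that(3) by simp
    then have "L dvd (c + i' * s) - (c + i * s)" using mod_eq_dvd_iff_nat[OF le] by blast
    moreover have "(c + i' * s) - (c + i * s) = (i' - i) * s" by (simp add: diff_mult_distrib)
    ultimately have "L dvd (i' - i)" using assms(1) coprime_dvd_mult_left_iff by metis
    moreover have "i' - i < L" using that by simp
    ultimately have "i' - i = 0" by (metis dvd_imp_le not_less neq0_conv)
    then show ?thesis using that by simp
  qed
  show ?thesis using *[of i i'] *[of i' i] assms by (cases "i \<le> i'") auto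
qed

lemma coprime_step:
  fixes L s :: nat
  assumes "0 < L" "s = 1 \<or> s = L - 1" shows "coprime L s"
proof (cases "s = 1")
  case False
  then have "s = L - 1" using assms(2) by blast
  then show ?thesis using coprime_diff_one_right_nat[OF assms(1)] by simp
qed simp

lemma card_walk_image:
  assumes "coprime L s" "n \<le> L"
  shows "card ((\<lambda>i. (c + i * s) mod L) ` {..<n}) = n"
proof -
  have "inj_on (\<lambda>i. (c + i * s) mod L) {..<n}"
  proof (rule inj_onI)
    fix i i' assume "i \<in> {..<n}" "i' \<in> {..<n}" "(c + i * s) mod L = (c + i' * s) mod L"
    then show "i = i'" using walk_inj[OF assms(1)] assms(2) by (meson lessThan_iff less_le_trans)
  qed
  then show ?thesis by (simp add: card_image)
qed

text \<open>A family F of pairwise separated subcritical rectangles covering A: this is what the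
  bootstrap map provides for every configuration of the set S.  Each site x of A lies in a
  block of F; along the short direction of that block, any straight walk from x leaves A
  within at most lc - 1 steps.\<close>

definition block :: "(nat \<times> nat) set set \<Rightarrow> nat \<times> nat \<Rightarrow> (nat \<times> nat) set" where
  "block F x = (SOME R. R \<in> F \<and> x \<in> R)"

definition short_dir :: "nat \<Rightarrow> nat \<Rightarrow> (nat \<times> nat) set set \<Rightarrow> nat \<times> nat \<Rightarrow> bool" where
  "short_dir L lc F x = (\<exists>a w. w \<le> lc - 1 \<and> fst ` block F x \<subseteq> arc L a w)"

locale subcritical_cover =
  fixes L lc :: nat and A :: "(nat \<times> nat) set" and F :: "(nat \<times> nat) set set"
  assumes L3: "3 \<le> L" and lc2: "2 \<le> lc" and lcL: "lc \<le> L" and AL: "A \<subseteq> Lam L"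
    and cov: "\<forall>x\<in>A. \<exists>R\<in>F. x \<in> R"
    and sep: "\<forall>R1\<in>F. \<forall>R2\<in>F. R1 \<noteq> R2 \<longrightarrow> \<not> close L R1 R2"
    and fit: "\<forall>R\<in>F. fits L lc R"
begin

lemma L0: "0 < L"
  using L3 by simp

lemma block_in: "x \<in> A \<Longrightarrow> block F x \<in> F \<and> x \<in> block F x"
  unfolding block_def using cov by (metis (mono_tags, lifting) someI_ex)

text \<open>Neighbouring sites of A lie in the same block, since distinct blocks are not close.\<close>

lemma block_nn: assumes "u \<in> A" "v \<in> A" "nn L u v" shows "block F u = block F v"
proof (rule ccontr)
  assume "block F u \<noteq> block F v"
  moreover have "close L (block F u) (block F v)"
    unfolding close_def using block_in assms nn_cd by blast
  ultimately show False using sep block_in assms by blast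
qed

lemma block_short_side:
  assumes "x \<in> A"
  shows "\<exists>a w. w \<le> lc - 1 \<and> coord (short_dir L lc F x) ` block F x \<subseteq> arc L a w"
proof (cases "short_dir L lc F x")
  case True then show ?thesis unfolding short_dir_def coord_def by auto
next
  case False
  obtain a b w v where f: "block F x \<subseteq> arc L a w \<times> arc L b v"
    "(w \<le> lc - 1 \<and> v \<le> lc) \<or> (w \<le> lc \<and> v \<le> lc - 1)"
    using fit block_in[OF assms] unfolding fits_def by blast
  have "fst ` block F x \<subseteq> arc L a w" "snd ` block F x \<subseteq> arc L b v" using f(1) by auto
  then show ?thesis using False f(2) unfolding short_dir_def coord_def by auto
qed

lemma walk_same_block:
  assumes x: "x \<in> A" and s: "s = 1 \<or> s = L - 1"
    and stay: "\<forall>i'\<le>i. shift L d x (i' * s) \<in> A"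
  shows "block F (shift L d x (i * s)) = block F x"
  using stay
proof (induction i)
  case 0
  have "x \<in> Lam L" using x AL by auto
  then show ?case by (simp add: shift_0)
next
  case (Suc i)
  have xL: "x \<in> Lam L" using x AL by auto
  have "shift L d x (Suc i * s) = shift L d (shift L d x (i * s)) s"
    by (simp add: shift_add add.commute)
  then have "nn L (shift L d x (i * s)) (shift L d x (Suc i * s))"
    using nn_shift[OF L3 shift_Lam[OF L0 xL] s] by simp
  then have "block F (shift L d x (i * s)) = block F (shift L d x (Suc i * s))"
    using Suc.prems block_nn by (meson le_SucI order_refl)
  then show ?case using Suc by simp
qed

text \<open>In the short direction, a walk of lc sites from x cannot stay in A: it would place lc
  distinct residues into an arc of length at most lc - 1.\<close>

lemma walk_leaves_A:
  assumes x: "x \<in> A" and s: "s = 1 \<or> s = L - 1"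
  shows "\<exists>i<lc. shift L (short_dir L lc F x) x (i * s) \<notin> A"
proof (rule ccontr)
  let ?d = "short_dir L lc F x"
  let ?walk = "\<lambda>i. (coord ?d x + i * s) mod L"
  assume "\<not> ?thesis"
  then have allA: "\<forall>i<lc. shift L ?d x (i * s) \<in> A" by simp
  obtain a w where aw: "w \<le> lc - 1" "coord ?d ` block F x \<subseteq> arc L a w"
    using block_short_side[OF x] by blast
  have "?walk ` {..<lc} \<subseteq> arc L a w"
  proof
    fix y assume "y \<in> ?walk ` {..<lc}"
    then obtain i where i: "i < lc" "y = ?walk i" by blast
    have "block F (shift L ?d x (i * s)) = block F x"
      using walk_same_block[OF x s] allA i by auto
    then have "shift L ?d x (i * s) \<in> block F x" using block_in allA i by metis
    then have "coord ?d (shift L ?d x (i * s)) \<in> arc L a w" using aw(2) by blast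
    then show "y \<in> arc L a w" using i(2) by (simp add: coord_shift)
  qed
  then have "card (?walk ` {..<lc}) \<le> card (arc L a w)" by (rule card_mono[OF finite_arc])
  moreover have "card (?walk ` {..<lc}) = lc" by (rule card_walk_image[OF coprime_step[OF L0 s] lcL])
  ultimately show False using aw(1) lc2 card_arc_le[of L a w] by simp
qed

lemma walk_exit:
  assumes x: "x \<in> A" and s: "s = 1 \<or> s = L - 1"
  defines "d \<equiv> short_dir L lc F x"
  shows "\<exists>j<lc - 1. shift L d x (j * s) \<in> A \<and> shift L d x ((j + 1) * s) \<notin> A
                   \<and> block F (shift L d x (j * s)) = block F x"
proof -
  have xL: "x \<in> Lam L" using x AL by auto
  define i0 where "i0 = (LEAST i. shift L d x (i * s) \<notin> A)"
  obtain i1 where i1: "i1 < lc" "shift L d x (i1 * s) \<notin> A"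
    using walk_leaves_A[OF x s] unfolding d_def by blast
  have i0: "shift L d x (i0 * s) \<notin> A" "i0 \<le> i1"
    unfolding i0_def by (rule LeastI[of _ i1], rule i1(2), rule Least_le, rule i1(2))
  have below: "shift L d x (i * s) \<in> A" if "i < i0" for i
    using not_less_Least that unfolding i0_def by blast
  have "i0 \<noteq> 0" using i0(1) x shift_0[OF xL, of d] by (metis mult_zero_left)
  then obtain j where j: "i0 = j + 1" by (metis Suc_eq_plus1 not0_implies_Suc)
  have "\<forall>i'\<le>j. shift L d x (i' * s) \<in> A" using below j by auto
  then show ?thesis
    using walk_same_block[OF x s] i0 i1(1) j by (intro exI[of _ j]) auto
qed

definition exits :: "nat \<Rightarrow> (nat \<times> nat) set" where
  "exits s = {e \<in> A. shift L (short_dir L lc F e) e s \<notin> A}"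

lemma short_dir_block: "block F u = block F v \<Longrightarrow> short_dir L lc F u = short_dir L lc F v"
  unfolding short_dir_def by simp

text \<open>Every site of A is reached from an exit site by walking back fewer than lc - 1 steps,
  so A is covered by fewer than lc - 1 copies of the exit set.\<close>

lemma card_A_exits:
  assumes s: "s = 1 \<or> s = L - 1"
  shows "card A \<le> card (exits s) * (lc - 1)"
proof -
  let ?g = "\<lambda>(e, j). shift L (short_dir L lc F e) e ((L - j) * s)"
  have "A \<subseteq> ?g ` (exits s \<times> {..<lc - 1})"
  proof
    fix x assume x: "x \<in> A"
    define d where "d = short_dir L lc F x"
    obtain j where j: "j < lc - 1" "shift L d x (j * s) \<in> A" "shift L d x ((j + 1) * s) \<notin> A"
      "block F (shift L d x (j * s)) = block F x"
      using walk_exit[OF x s] unfolding d_def by blast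
    define e where "e = shift L d x (j * s)"
    have de: "short_dir L lc F e = d" using short_dir_block[OF j(4)] by (simp add: e_def d_def)
    have "shift L d e s = shift L d x ((j + 1) * s)" unfolding e_def by (simp add: shift_add add.commute)
    then have "e \<in> exits s" using j(2,3) de unfolding exits_def e_def by simp
    moreover have "j * s + (L - j) * s = L * s" using j lcL by (simp add: add_mult_distrib[symmetric])
    then have "?g (e, j) = x"
      using de shift_full_turns[of x L d s] x AL unfolding e_def by (auto simp: shift_add)
    ultimately show "x \<in> ?g ` (exits s \<times> {..<lc - 1})"
      using j(1) by (intro rev_image_eqI[of "(e, j)"]) auto
  qed
  moreover have "exits s \<subseteq> Lam L" using AL unfolding exits_def by blast
  then have "finite (exits s)" using finite_Lam by (rule finite_subset)
  ultimately have "card A \<le> card (?g ` (exits s \<times> {..<lc - 1}))" by (intro card_mono) simp_all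
  also have "\<dots> \<le> card (exits s \<times> {..<lc - 1})" by (rule card_image_le) (use \<open>finite (exits s)\<close> in auto)
  finally show ?thesis by (simp add: card_cartesian_product)
qed

definition exit_edge :: "nat \<Rightarrow> nat \<times> nat \<Rightarrow> (nat \<times> nat) set" where
  "exit_edge s e = {e, shift L (short_dir L lc F e) e s}"

lemma exit_edge_boundary:
  assumes s: "s = 1 \<or> s = L - 1" and e: "e \<in> exits s"
  shows "exit_edge s e \<in> boundary L A"
proof -
  have eA: "e \<in> A" "shift L (short_dir L lc F e) e s \<notin> A" using e unfolding exits_def by auto
  have eL: "e \<in> Lam L" using eA AL by blast
  have "exit_edge s e \<in> edges L"
    unfolding edges_def exit_edge_def using eL shift_Lam[OF L0 eL] nn_shift[OF L3 eL s] by blast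
  then show ?thesis unfolding boundary_def exit_edge_def using eA by blast
qed

lemma exit_edge_inj: "inj_on (exit_edge s) (exits s)"
proof (rule inj_onI)
  fix e e' assume ee: "e \<in> exits s" "e' \<in> exits s" "exit_edge s e = exit_edge s e'"
  then have "e \<in> exit_edge s e'" unfolding exit_edge_def by auto
  then show "e = e'" using ee unfolding exits_def exit_edge_def by auto
qed

text \<open>Forward and backward exit edges are different edges: a common edge would have to join
  an exit site e to both its forward and its backward neighbour.\<close>

lemma exit_edges_disjoint: "exit_edge 1 ` exits 1 \<inter> exit_edge (L - 1) ` exits (L - 1) = {}"
proof (rule ccontr)
  assume "\<not> ?thesis"
  then obtain e e' where ee: "e \<in> exits 1" "e' \<in> exits (L - 1)" "exit_edge 1 e = exit_edge (L - 1) e'"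
    by blast
  have eA: "e \<in> A" "e' \<in> A" "shift L (short_dir L lc F e') e' (L - 1) \<notin> A"
    using ee unfolding exits_def by auto
  have "e \<in> exit_edge (L - 1) e'" using ee(3) unfolding exit_edge_def by auto
  then have "e = e'" using eA unfolding exit_edge_def by auto
  have eL: "e \<in> Lam L" using eA AL by blast
  let ?d = "short_dir L lc F e"
  have "shift L ?d e 1 \<in> exit_edge (L - 1) e" using ee(3) \<open>e = e'\<close> unfolding exit_edge_def by auto
  moreover have "nn L e (shift L ?d e 1)" by (rule nn_shift[OF L3 eL]) simp
  then have "shift L ?d e 1 \<noteq> e" using nn_neq by metis
  moreover have "shift L ?d e 1 \<noteq> shift L ?d e (L - 1)" by (rule shift_forward_neq_backward[OF L3 eL])
  ultimately show False unfolding exit_edge_def by auto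
qed

text \<open>The isoperimetric inequality for subcritical configurations:
  each site of A needs, per orientation, a boundary edge within distance lc - 1.\<close>

lemma card_boundary: "2 * card A \<le> (lc - 1) * card (boundary L A)"
proof -
  have s1: "(1::nat) = 1 \<or> (1::nat) = L - 1" and s2: "L - 1 = 1 \<or> L - 1 = L - 1" by simp_all
  have sub: "exit_edge s ` exits s \<subseteq> boundary L A" if "s = 1 \<or> s = L - 1" for s
    using exit_edge_boundary[OF that] by blast
  have fin: "finite (exit_edge s ` exits s)" if "s = 1 \<or> s = L - 1" for s
    using sub[OF that] finite_boundary by (rule finite_subset)
  have "card (exit_edge 1 ` exits 1) + card (exit_edge (L - 1) ` exits (L - 1))
        = card (exit_edge 1 ` exits 1 \<union> exit_edge (L - 1) ` exits (L - 1))"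
    using exit_edges_disjoint fin[OF s1] fin[OF s2] by (intro card_Un_disjoint[symmetric])
  also have "\<dots> \<le> card (boundary L A)"
    using sub[OF s1] sub[OF s2] finite_boundary by (intro card_mono) auto
  finally have "card (exits 1) + card (exits (L - 1)) \<le> card (boundary L A)"
    by (simp add: card_image exit_edge_inj)
  moreover have "2 * card A \<le> (card (exits 1) + card (exits (L - 1))) * (lc - 1)"
    using card_A_exits[OF s1] card_A_exits[OF s2] by (simp add: add_mult_distrib)
  ultimately show ?thesis by (metis mult.commute mult_le_mono1 order_trans)
qed

end

lemma subcritical_card_boundary:
  assumes "3 \<le> L" "2 \<le> lc" "lc \<le> L" "A \<in> Sset L lc"
  shows "2 * card A \<le> (lc - 1) * card (boundary L A)"
proof -
  have L0: "0 < L" using assms by simp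
  have AL: "A \<subseteq> Lam L" using assms(4) unfolding Sset_def Xs_def by auto
  interpret subcritical_cover L lc A "CB L A"
  proof
    show "\<forall>R1\<in>CB L A. \<forall>R2\<in>CB L A. R1 \<noteq> R2 \<longrightarrow> \<not> close L R1 R2"
      using CB_final[OF L0 AL] unfolding bootstrap_final_def by blast
    show "\<forall>R\<in>CB L A. fits L lc R" using assms(4) unfolding Sset_def subcritical_def by blast
    show "\<forall>x\<in>A. \<exists>R\<in>CB L A. x \<in> R" using CB_covers[OF L0 AL] by blast
  qed (use assms AL in auto)
  show ?thesis by (rule card_boundary)
qed

section \<open>Energy and two subcritical configurations\<close>

lemma edge_two_sites: "e \<in> edges L \<Longrightarrow> \<exists>x y. e = {x, y} \<and> x \<noteq> y"
  unfolding edges_def using nn_neq by blast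

lemma edge_spin_product:
  assumes "e \<in> edges L"
  shows "(\<Prod>z\<in>e. spin A z) = (if e \<in> boundary L A then -1 else 1)"
proof -
  obtain x y where xy: "e = {x, y}" "x \<noteq> y" using edge_two_sites[OF assms] by blast
  have "e \<in> boundary L A \<longleftrightarrow> (x \<in> A) \<noteq> (y \<in> A)"
    unfolding boundary_def using assms xy by auto
  then show ?thesis using xy by (auto simp: spin_def)
qed

lemma sum_indicator_card:
  assumes "finite S" "B \<subseteq> S"
  shows "(\<Sum>e\<in>S. if e \<in> B then (a::real) else b) = a * real (card B) + b * real (card S - card B)"
proof -
  have "(\<Sum>e\<in>S. if e \<in> B then a else b) = (\<Sum>e\<in>B. a) + (\<Sum>e\<in>S - B. b)"
    using sum.If_cases[OF assms(1), of "\<lambda>e. e \<in> B" "\<lambda>_. a" "\<lambda>_. b"] assms(2)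
    by (simp add: Int_absorb1 Diff_eq)
  also have "card (S - B) = card S - card B" using assms by (simp add: card_Diff_subset finite_subset)
  ultimately show ?thesis by (simp add: mult.commute)
qed

lemma sum_edge_spins: "(\<Sum>e\<in>edges L. \<Prod>x\<in>e. spin A x) = real (card (edges L)) - 2 * real (card (boundary L A))"
proof -
  have sub: "boundary L A \<subseteq> edges L" unfolding boundary_def by auto
  have "(\<Sum>e\<in>edges L. \<Prod>x\<in>e. spin A x) = (\<Sum>e\<in>edges L. if e \<in> boundary L A then -1 else 1)"
    by (rule sum.cong) (auto simp: edge_spin_product)
  moreover have "card (boundary L A) \<le> card (edges L)" by (rule card_mono[OF finite_edges sub])
  ultimately show ?thesis by (simp add: sum_indicator_card[OF finite_edges sub] of_nat_diff)
qed

lemma Ham_increment: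
  assumes "A \<subseteq> Lam L"
  shows "Ham L J h A - Ham L J h {} = J * real (card (boundary L A)) - h * real (card A)"
proof -
  have b0: "boundary L {} = {}" unfolding boundary_def by auto
  have "card A \<le> card (Lam L)" by (rule card_mono[OF finite_Lam assms])
  moreover have "(\<Sum>x\<in>Lam L. spin A x) = (\<Sum>x\<in>Lam L. if x \<in> A then 1 else -1)"
    unfolding spin_def ..
  ultimately have s1: "(\<Sum>x\<in>Lam L. spin A x) = 2 * real (card A) - real (card (Lam L))"
    by (simp add: sum_indicator_card[OF finite_Lam assms] of_nat_diff)
  have s0: "(\<Sum>x\<in>Lam L. spin {} x) = - real (card (Lam L))" unfolding spin_def by simp
  show ?thesis unfolding Ham_def sum_edge_spins b0 s1 s0 by (simp add: algebra_simps)
qed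

lemma Ham_increment_S:
  assumes "J > 0" "3 \<le> L" "2 \<le> lc" "lc \<le> L" "A \<in> Sset L lc"
  shows "(2 * J / real (lc - 1) - h) * real (card A) \<le> Ham L J h A - Ham L J h {}"
proof -
  have AL: "A \<subseteq> Lam L" using assms(5) unfolding Sset_def Xs_def by auto
  have "2 * real (card A) \<le> real (lc - 1) * real (card (boundary L A))"
    using subcritical_card_boundary[OF assms(2-5)] by (metis of_nat_le_iff of_nat_mult of_nat_numeral)
  then have "2 * J * real (card A) \<le> J * (real (lc - 1) * real (card (boundary L A)))"
    using assms(1) by simp
  then have "2 * J / real (lc - 1) * real (card A) \<le> J * real (card (boundary L A))"
    using assms(3) by (simp add: field_simps)
  then show ?thesis unfolding Ham_increment[OF AL] by (simp add: algebra_simps)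
qed

text \<open>A support whose sites are pairwise far apart (no two of them close) is its own bootstrap
  family of one-site rectangles, and therefore lies in S.\<close>

definition sparse :: "nat \<Rightarrow> (nat \<times> nat) set \<Rightarrow> bool" where
  "sparse L A \<longleftrightarrow> (\<forall>p\<in>A. \<forall>q\<in>A. p \<noteq> q \<longrightarrow> \<not> (cd L (fst p) (fst q) \<le> 1 \<and> cd L (snd p) (snd q) \<le> 1))"

lemma sparse_cluster:
  assumes far: "sparse L A"
    and "p \<in> A"
  shows "cluster L A p = {p}"
proof -
  have "y = p" if "(\<lambda>u v. u \<in> A \<and> v \<in> A \<and> nn L u v)\<^sup>*\<^sup>* p y" for y
    using that
  proof (induction rule: rtranclp_induct)
    case (step y z)
    then have "y \<in> A" "z \<in> A" "nn L y z" by auto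
    then show ?case using step.IH far nn_cd[of L y z] nn_neq[of L y z] unfolding sparse_def by blast
  qed simp
  then show ?thesis unfolding cluster_def by auto
qed

lemma sparse_init_rects:
  assumes far: "sparse L A"
    and AL: "A \<subseteq> Lam L"
  shows "init_rects L A = (\<lambda>p. {p}) ` A"
proof -
  have "is_circ L {p} R \<longleftrightarrow> R = {p}" if "p \<in> A" for p R
  proof -
    have "fst p < L" "snd p < L" using that AL unfolding Lam_def by auto
    then have "is_circ L {p} (fst ` {p} \<times> snd ` {p})"
      by (intro circ_of_projections) (auto intro: is_arc_single)
    then have "is_circ L {p} {p}" by (cases p) simp
    then show ?thesis using circ_unique by blast
  qed
  then show ?thesis unfolding init_rects_def using sparse_cluster[OF far] by auto
qed

lemma sparse_in_S:
  assumes far: "sparse L A"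
    and L: "0 < L" and lc: "2 \<le> lc" and AL: "A \<subseteq> Lam L"
  shows "A \<in> Sset L lc"
proof -
  have no_merge: "\<not> merge_step L ((\<lambda>p. {p}) ` A) F'" for F'
    using far unfolding merge_step_def close_def sparse_def by blast
  have "(merge_step L)\<^sup>*\<^sup>* ((\<lambda>p. {p}) ` A) F \<Longrightarrow> F = (\<lambda>p. {p}) ` A" for F
    by (induction rule: rtranclp_induct) (use no_merge in auto)
  then have CB_eq: "CB L A = (\<lambda>p. {p}) ` A"
    using CB_final[OF L AL] sparse_init_rects[OF far AL] unfolding bootstrap_final_def by auto
  have "fits L lc {p}" if "p \<in> A" for p
  proof -
    have "fst p < L" "snd p < L" using that AL unfolding Lam_def by auto
    then have "{p} \<subseteq> arc L (fst p) 1 \<times> arc L (snd p) 1"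
      by (simp add: arc_single[of "fst p"] arc_single[of "snd p"] mem_Times_iff del: One_nat_def)
    then show ?thesis unfolding fits_def using lc by (intro exI[of _ "fst p"] exI[of _ "snd p"] exI[of _ 1] exI[of _ 1]) auto
  qed
  then have "subcritical L lc (CB L A)" unfolding subcritical_def CB_eq by blast
  then show ?thesis unfolding Sset_def Xs_def using AL by auto
qed

lemma empty_in_S: "0 < L \<Longrightarrow> 2 \<le> lc \<Longrightarrow> {} \<in> Sset L lc"
  by (rule sparse_in_S) (auto simp: sparse_def)

definition checkerboard :: "nat \<Rightarrow> (nat \<times> nat) set" where
  "checkerboard L = (\<lambda>(i, j). (2 * i, 2 * j)) ` ({..<L div 2} \<times> {..<L div 2})"

lemma card_checkerboard: "card (checkerboard L) = (L div 2) * (L div 2)"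
proof -
  have "inj_on (\<lambda>(i, j). (2 * i, 2 * j)) ({..<L div 2} \<times> {..<L div 2})"
    by (rule inj_onI) auto
  then show ?thesis unfolding checkerboard_def by (simp add: card_image card_cartesian_product)
qed

lemma checkerboard_Lam: "checkerboard L \<subseteq> Lam L"
  unfolding checkerboard_def Lam_def by auto

lemma cd_even:
  assumes "i < L div 2" "i' < L div 2" "i \<noteq> i'"
  shows "2 \<le> cd L (2 * i) (2 * i')"
  using assms by (auto simp: cd_ofs ofs_eq)

lemma sparse_checkerboard: "sparse L (checkerboard L)"
  using cd_even[of _ L] unfolding sparse_def checkerboard_def by fastforce

lemma checkerboard_in_S: "0 < L \<Longrightarrow> 2 \<le> lc \<Longrightarrow> checkerboard L \<in> Sset L lc"
  using sparse_in_S[OF sparse_checkerboard] checkerboard_Lam by blast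

lemma checkerboard_large:
  assumes "3 \<le> L" "fb > 9"
  shows "real (card (Lam L)) / fb < real (card (checkerboard L))"
proof -
  have "L \<le> 3 * (L div 2)" using assms(1) by linarith
  then have "L * L \<le> (3 * (L div 2)) * (3 * (L div 2))" by (intro mult_le_mono) auto
  then have "real (card (Lam L)) \<le> 9 * real (card (checkerboard L))"
    unfolding card_Lam card_checkerboard by (simp only: of_nat_le_iff[symmetric])
  moreover have "real (card (Lam L)) / fb < real (card (Lam L)) / 9"
    using assms by (intro divide_strict_left_mono) (auto simp: card_Lam)
  ultimately show ?thesis by linarith
qed

section \<open>The large-deviation estimate\<close>

text \<open>Split exp(-a n) = exp(-(a - ln fb) n) (1/fb)^n and sum (1/fb)^|A| over all subsets.\<close>

lemma sum_exp_large_subsets: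
  fixes a K fb :: real
  assumes fin: "finite \<Lambda>" and fb: "fb > 1" and a: "ln fb \<le> a"
  shows "(\<Sum>A\<in>{A \<in> Pow \<Lambda>. K < real (card A)}. exp (- a * real (card A)))
           \<le> exp (- (a - ln fb) * K + real (card \<Lambda>) / fb)"
proof -
  let ?E = "exp (- (a - ln fb) * K)"
  have split: "exp (- a * real (card A)) \<le> ?E * (1 / fb) ^ card A" if "K < real (card A)" for A
  proof -
    have "(a - ln fb) * K \<le> (a - ln fb) * real (card A)"
      using a that by (intro mult_left_mono) auto
    then have "- (a - ln fb) * real (card A) \<le> - (a - ln fb) * K"
      by (simp only: mult_minus_left neg_le_iff_le)
    then have "exp (- (a - ln fb) * real (card A)) \<le> ?E" by (simp only: exp_le_cancel_iff)
    moreover have "exp (- a * real (card A)) = exp (- (a - ln fb) * real (card A)) * exp (ln (1 / fb) * real (card A))"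
      using fb by (simp add: exp_add[symmetric] ln_div algebra_simps)
    moreover have "exp (ln (1 / fb) * real (card A)) = exp (ln (1 / fb)) ^ card A"
      by (subst mult.commute) (rule exp_of_nat_mult)
    moreover have "exp (ln (1 / fb)) = 1 / fb" using fb by simp
    ultimately show ?thesis by (simp add: mult_right_mono)
  qed
  have "(\<Sum>A\<in>{A \<in> Pow \<Lambda>. K < real (card A)}. exp (- a * real (card A)))
        \<le> (\<Sum>A\<in>{A \<in> Pow \<Lambda>. K < real (card A)}. ?E * (1 / fb) ^ card A)"
    by (rule sum_mono) (use split in blast)
  also have "\<dots> \<le> (\<Sum>A\<in>Pow \<Lambda>. ?E * (1 / fb) ^ card A)"
    using fin fb by (intro sum_mono2) auto
  also have "\<dots> = ?E * (1 / fb + 1) ^ card \<Lambda>"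
    using prod_add[of \<Lambda> "\<lambda>_. 1 / fb" "\<lambda>_. 1"] fin by (simp add: sum_distrib_left)
  also have "\<dots> \<le> ?E * exp (1 / fb) ^ card \<Lambda>"
    using fb by (intro mult_left_mono power_mono) (auto simp: add.commute[of "1 / fb"])
  also have "\<dots> = exp (- (a - ln fb) * K + real (card \<Lambda>) / fb)"
    by (simp add: exp_add exp_of_nat_mult[symmetric])
  finally show ?thesis .
qed

lemma gibbs_ratio:
  assumes "S \<subseteq> Xs L" "T \<subseteq> S"
  shows "gibbs L J h \<beta> T / gibbs L J h \<beta> S
         = (\<Sum>A\<in>T. exp (- \<beta> * Ham L J h A)) / (\<Sum>A\<in>S. exp (- \<beta> * Ham L J h A))"
proof -
  have "Zpart L J h \<beta> > 0"
    unfolding Zpart_def Xs_def by (rule sum_pos2[of _ "{}"]) (auto simp: finite_Lam)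
  moreover have "T \<inter> Xs L = T" "S \<inter> Xs L = S" using assms by auto
  ultimately show ?thesis unfolding gibbs_def by simp
qed

lemma weight_decay_S:
  fixes J h \<beta> :: real
  assumes "J > 0" "3 \<le> L" "2 \<le> lc" "lc \<le> L" "0 \<le> \<beta>" "A \<in> Sset L lc"
  shows "exp (- \<beta> * Ham L J h A)
           \<le> exp (- \<beta> * Ham L J h {}) * exp (- (\<beta> * (2 * J / real (lc - 1) - h)) * real (card A))"
proof -
  have "\<beta> * ((2 * J / real (lc - 1) - h) * real (card A)) \<le> \<beta> * (Ham L J h A - Ham L J h {})"
    using Ham_increment_S[OF assms(1-4,6)] assms(5) by (intro mult_left_mono) auto
  then show ?thesis by (simp add: exp_add[symmetric] algebra_simps)
qed

lemma ln_ratio_le: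
  fixes T S w X :: real
  assumes "0 < T" "0 < w" "w \<le> S" "T \<le> w * exp X"
  shows "ln (T / S) \<le> X"
proof -
  have "T / S \<le> T / w" using assms by (intro divide_left_mono) auto
  also have "\<dots> \<le> exp X" using assms by (simp add: field_simps)
  finally have "T / S \<le> exp X" .
  moreover have "0 < T / S" using assms by simp
  ultimately show ?thesis by (metis exp_gt_zero ln_exp ln_le_cancel_iff)
qed

text \<open>Every A in S \ W has more than K = |Lambda|/fb plus spins and,
  relative to the empty configuration, weight at most exp(-beta c |A|); the empty configuration
  lies in S and the checkerboard in S \ W.\<close>

lemma log_ratio_bound:
  fixes J h \<beta> fb c :: real and L lc :: nat
  assumes J: "J > 0" and L3: "3 \<le> L" and lc2: "2 \<le> lc" and lcL: "lc \<le> L"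
    and c_def: "c = 2 * J / real (lc - 1) - h" and \<beta>: "\<beta> > 0" and fb: "fb > 9"
    and lnfb: "ln fb \<le> \<beta> * c"
  shows "ln (gibbs L J h \<beta> (Sset L lc - Wset L lc fb) / gibbs L J h \<beta> (Sset L lc))
           \<le> real (card (Lam L)) / fb * (1 + ln fb - \<beta> * c)"
proof -
  define w where "w A = exp (- \<beta> * Ham L J h A)" for A
  define K where "K = real (card (Lam L)) / fb"
  let ?S = "Sset L lc" and ?T = "Sset L lc - Wset L lc fb"
  have L0: "0 < L" using L3 by simp
  have SX: "?S \<subseteq> Xs L" unfolding Sset_def by auto
  then have finS: "finite ?S" unfolding Xs_def using finite_Lam by (meson finite_Pow_iff finite_subset)
  have T_large: "?T \<subseteq> {A \<in> Pow (Lam L). K < real (card A)}"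
    using SX unfolding Wset_def K_def Xs_def by auto
  have "(\<Sum>A\<in>?T. w A) \<le> (\<Sum>A\<in>?T. w {} * exp (- (\<beta> * c) * real (card A)))"
    using weight_decay_S[OF J L3 lc2 lcL] \<beta> unfolding w_def c_def by (intro sum_mono) auto
  also have "\<dots> \<le> w {} * (\<Sum>A\<in>{A \<in> Pow (Lam L). K < real (card A)}. exp (- (\<beta> * c) * real (card A)))"
    unfolding sum_distrib_left[symmetric] using T_large finite_Lam
    by (intro mult_left_mono sum_mono2) (auto simp: w_def)
  also have "\<dots> \<le> w {} * exp (- (\<beta> * c - ln fb) * K + K)"
    using sum_exp_large_subsets[OF finite_Lam _ lnfb, where K = K] fb
    by (intro mult_left_mono) (auto simp: w_def K_def)
  finally have upper: "(\<Sum>A\<in>?T. w A) \<le> w {} * exp (- (\<beta> * c - ln fb) * K + K)" .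
  have lower: "w {} \<le> (\<Sum>A\<in>?S. w A)"
    using empty_in_S[OF L0 lc2] finS by (intro member_le_sum) (auto simp: w_def)
  have "checkerboard L \<in> ?T"
    using checkerboard_in_S[OF L0 lc2] checkerboard_large[OF L3 fb] unfolding Wset_def by auto
  then have T_pos: "(\<Sum>A\<in>?T. w A) > 0"
    using finS by (intro sum_pos2[of _ "checkerboard L"]) (auto simp: w_def)
  have "ln ((\<Sum>A\<in>?T. w A) / (\<Sum>A\<in>?S. w A)) \<le> - (\<beta> * c - ln fb) * K + K"
    by (rule ln_ratio_le[OF T_pos _ lower upper]) (simp add: w_def)
  also have "\<dots> = K * (1 + ln fb - \<beta> * c)" by (simp add: algebra_simps)
  finally show ?thesis unfolding gibbs_ratio[OF SX Diff_subset] w_def[symmetric] K_def .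
qed

text \<open>The critical length lc = ceiling(2J/h) satisfies lc - 1 < 2J/h, so the energy cost
  c per plus spin in S is positive.\<close>

lemma critical_length:
  fixes J h :: real
  assumes "0 < h" "h < 2 * J"
  shows "2 \<le> nat \<lceil>2 * J / h\<rceil>" and "0 < 2 * J / real (nat \<lceil>2 * J / h\<rceil> - 1) - h"
proof -
  define x where "x = 2 * J / h"
  have "x > 1" unfolding x_def using assms by (simp add: field_simps)
  moreover have "of_int \<lceil>x\<rceil> - 1 < x" "x \<le> of_int \<lceil>x\<rceil>" using ceiling_correct[of x] by auto
  ultimately have "2 \<le> \<lceil>x\<rceil>" by linarith
  then show "2 \<le> nat \<lceil>2 * J / h\<rceil>" unfolding x_def by linarith
  have "int (nat \<lceil>x\<rceil> - 1) = \<lceil>x\<rceil> - 1" using \<open>2 \<le> \<lceil>x\<rceil>\<close> by linarith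
  then have "real (nat \<lceil>x\<rceil> - 1) = of_int \<lceil>x\<rceil> - 1" by (metis of_int_diff of_int_of_nat_eq of_int_1)
  then have "real (nat \<lceil>x\<rceil> - 1) < x" "0 < real (nat \<lceil>x\<rceil> - 1)"
    using \<open>of_int \<lceil>x\<rceil> - 1 < x\<close> \<open>2 \<le> \<lceil>x\<rceil>\<close> by linarith+
  then have "h < 2 * J / real (nat \<lceil>x\<rceil> - 1)"
    using assms(1) unfolding x_def by (simp add: field_simps)
  then show "0 < 2 * J / real (nat \<lceil>2 * J / h\<rceil> - 1) - h" unfolding x_def by simp
qed

text \<open>Asymptotic form of the finite-volume estimate: once the torus is large, f(beta) > 9
  and ln f(beta) < beta c / 4, dividing by beta gives
  ln(ratio)/beta \<le> (1/beta + ln f/beta - c) |Lambda|/f \<le> -(c/2) |Lambda|/f.\<close>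

lemma eventually_log_ratio_bound:
  fixes J h c :: real and lc :: nat and L :: "real \<Rightarrow> nat" and f :: "real \<Rightarrow> real"
  assumes J: "J > 0" and lc2: "2 \<le> lc" and c_def: "c = 2 * J / real (lc - 1) - h" and c0: "c > 0"
    and L_lim: "filterlim (\<lambda>\<beta>. real (card (Lam (L \<beta>)))) at_top at_top"
    and f_lim: "filterlim f at_top at_top"
    and lnf_lim: "((\<lambda>\<beta>. ln (f \<beta>) / \<beta>) \<longlongrightarrow> 0) at_top"
  shows "\<forall>\<^sub>F \<beta> in at_top.
           ln (gibbs (L \<beta>) J h \<beta> (Sset (L \<beta>) lc - Wset (L \<beta>) lc (f \<beta>)) / gibbs (L \<beta>) J h \<beta> (Sset (L \<beta>) lc)) / \<beta>
           \<le> - (c / 2) * (real (card (Lam (L \<beta>))) / f \<beta>)"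
proof -
  have "\<forall>\<^sub>F \<beta> in at_top. \<beta> > 4 / c \<and> \<beta> > 0" by (intro eventually_conj eventually_gt_at_top)
  moreover have "\<forall>\<^sub>F \<beta> in at_top. real ((lc + 3) ^ 2) \<le> real (card (Lam (L \<beta>)))"
    using L_lim unfolding filterlim_at_top by blast
  moreover have "\<forall>\<^sub>F \<beta> in at_top. 10 \<le> f \<beta>"
    using f_lim unfolding filterlim_at_top by blast
  moreover have "\<forall>\<^sub>F \<beta> in at_top. ln (f \<beta>) / \<beta> < c / 4"
    using c0 by (intro order_tendstoD(2)[OF lnf_lim]) simp
  ultimately show ?thesis
  proof eventually_elim
    case (elim \<beta>)
    let ?K = "real (card (Lam (L \<beta>))) / f \<beta>"
    have \<beta>: "\<beta> > 0" "1 / \<beta> < c / 4" using elim(1) c0 by (auto simp: field_simps)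
    have "(lc + 3) ^ 2 \<le> card (Lam (L \<beta>))" using elim(2) by (simp only: of_nat_le_iff)
    then have "(lc + 3) ^ 2 \<le> (L \<beta>) ^ 2" unfolding card_Lam power2_eq_square .
    then have "lc + 3 \<le> L \<beta>" by (rule power2_le_imp_le) simp
    moreover have "ln (f \<beta>) \<le> \<beta> * c" using elim(4) \<beta> c0 by (simp add: field_simps)
    ultimately have "ln (gibbs (L \<beta>) J h \<beta> (Sset (L \<beta>) lc - Wset (L \<beta>) lc (f \<beta>)) / gibbs (L \<beta>) J h \<beta> (Sset (L \<beta>) lc))
        \<le> ?K * (1 + ln (f \<beta>) - \<beta> * c)"
      using elim(3) by (intro log_ratio_bound[OF J _ lc2 _ c_def \<beta>(1)]) auto
    also have "\<dots> = \<beta> * (?K * (1 / \<beta> + ln (f \<beta>) / \<beta> - c))" using \<beta> elim(3) by (simp add: field_simps)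
    also have "\<dots> \<le> \<beta> * (?K * (- (c / 2)))"
    proof (intro mult_left_mono)
      show "1 / \<beta> + ln (f \<beta>) / \<beta> - c \<le> - (c / 2)" using \<beta>(2) elim(4) by linarith
      show "0 \<le> ?K" using elim(3) by simp
    qed (use \<beta> in simp)
    finally show ?case using \<beta>(1) by (simp add: field_simps)
  qed
qed

text \<open>Only the divergence of |Lambda|/f(beta) is used at the last step.\<close>

theorem lemmaA1:
  fixes J h :: real and L :: "real \<Rightarrow> nat" and f :: "real \<Rightarrow> real"
  assumes "J > 0" and "h > 0" and "h < 2 * J"
    and "\<forall>n::nat. 2 * J / h \<noteq> real n"
    and "\<forall>\<beta>>0. odd (L \<beta>)"
    and "filterlim (\<lambda>\<beta>. real (card (Lam (L \<beta>)))) at_top at_top"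
    and "\<forall>\<beta>>0. f \<beta> > 0"
    and "filterlim f at_top at_top"
    and "((\<lambda>\<beta>. ln (f \<beta>) / \<beta>) \<longlongrightarrow> 0) at_top"
    and "filterlim (\<lambda>\<beta>. real (card (Lam (L \<beta>))) / f \<beta>) at_top at_top"
  shows "filterlim
     (\<lambda>\<beta>. ln (gibbs (L \<beta>) J h \<beta>
                   (Sset (L \<beta>) (nat \<lceil>2 * J / h\<rceil>) - Wset (L \<beta>) (nat \<lceil>2 * J / h\<rceil>) (f \<beta>))
               / gibbs (L \<beta>) J h \<beta> (Sset (L \<beta>) (nat \<lceil>2 * J / h\<rceil>))) / \<beta>)
     at_bot at_top"
proof -
  define lc where "lc = nat \<lceil>2 * J / h\<rceil>"
  define c where "c = 2 * J / real (lc - 1) - h"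
  have lc2: "2 \<le> lc" and c0: "0 < c"
    using critical_length[OF assms(2,3)] unfolding lc_def c_def by auto
  have "filterlim (\<lambda>\<beta>. c / 2 * (real (card (Lam (L \<beta>))) / f \<beta>)) at_top at_top"
    using c0 by (intro filterlim_tendsto_pos_mult_at_top[OF tendsto_const _ assms(10)]) simp
  moreover have "\<forall>\<^sub>F \<beta> in at_top. c / 2 * (real (card (Lam (L \<beta>))) / f \<beta>)
      \<le> - (ln (gibbs (L \<beta>) J h \<beta> (Sset (L \<beta>) lc - Wset (L \<beta>) lc (f \<beta>)) / gibbs (L \<beta>) J h \<beta> (Sset (L \<beta>) lc)) / \<beta>)"
    using eventually_log_ratio_bound[OF assms(1) lc2 c_def c0 assms(6,8,9)] by (rule eventually_mono) simp
  ultimately show ?thesis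
    unfolding lc_def[symmetric] filterlim_uminus_at_bot by (rule filterlim_at_top_mono)
qed

end
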